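(* In the setting of the context (CFSR scheme: flux reconstruction with chain-rule flux derivatives), let $\mathcal{E}_j=(\Phi_{j+1/2}-\Phi_{j-1/2})/h$ evaluated on exact nodal values. If $\kappa_3=0$, then as $h\to0$ with derivatives at $x_j$, $$\mathcal{E}_j=\frac{\partial f}{\partial x}+\frac{3\theta-1}{12}\frac{\partial^3 f}{\partial x^3}h^2-\frac{\kappa-1}{8}\left[\frac{\partial D}{\partial x}\frac{\partial^3 u}{\partial x^3}+D(u(x_j))\frac{\partial^4 u}{\partial x^4}\right]h^3+O(h^4),$$ where $f$ denotes $f(u(x))$ and $\partial D/\partial x=\frac{d}{dx}D(u(x))$; thus $\theta=1/3$ gives third-order accuracy. Moreover, if $\theta=1/3$ and $\kappa_3=\kappa-1$, then $\mathcal{E}_j=\frac{\partial f}{\partial x}+O(h^4)$.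
   Context: Let $h>0$, uniform grid $x_i=ih$, $i\in\mathbb{Z}$. Let $u$ be a smooth real function of $x$, $u_i=u(x_i)$; let $f$ (flux) and $D$ (dissipation coefficient) be smooth real functions of one variable; $f_i=f(u_i)$. Define successive central differences $(u_x)_i=(u_{i+1}-u_{i-1})/(2h)$, $(u_{xx})_i=((u_x)_{i+1}-(u_x)_{i-1})/(2h)$. For the face $i+1/2$ with $j=i$, $k=i+1$, let $T_j=\frac h4((u_x)_k-(u_x)_j)-\frac{h^2}{4}(u_{xx})_j$, $T_k=\frac h4((u_x)_k-(u_x)_j)-\frac{h^2}{4}(u_{xx})_k$, and reconstructed states (parameters $\kappa,\kappa_3$) $u_L=\kappa\frac{u_j+u_k}{2}+(1-\kappa)[u_j+\frac h2(u_x)_j]+\kappa_3T_j$, $u_R=\kappa\frac{u_j+u_k}{2}+(1-\kappa)[u_k-\frac h2(u_x)_k]+\kappa_3T_k$. Reconstructed fluxes with parameter $\theta$ and chain-rule derivatives: $f_L=\theta\frac{f_j+f_k}{2}+(1-\theta)[f_j+f'(u_j)\frac h2(u_x)_j]$, $f_R=\theta\frac{f_j+f_k}{2}+(1-\theta)[f_k-f'(u_k)\frac h2(u_x)_k]$. Numerical flux: $\Phi_{i+1/2}=\frac12(f_L+f_R)-\frac12D_{i+1/2}(u_R-u_L)$, with $D_{i+1/2}=\bar D(u_i,u_{i+1})$ for a smooth symmetric $\bar D$ with $\bar D(v,v)=D(v)$. *)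

theory Defs
  imports "HOL-Analysis.Analysis" "HOL-Library.Landau_Symbols"
begin

definition smooth1 :: "(real \<Rightarrow> real) \<Rightarrow> bool" where
  "smooth1 g \<longleftrightarrow> (\<forall>n x. (deriv ^^ n) g differentiable (at x))"

text \<open>Smooth (C-infinity) real function of two real variables: it lies in a family of
  jointly continuous functions that is closed under taking both partial derivatives
  (all partial derivatives of all orders exist everywhere and are continuous).\<close>
definition smooth2 :: "(real \<Rightarrow> real \<Rightarrow> real) \<Rightarrow> bool" where
  "smooth2 g \<longleftrightarrow> (\<exists>S. g \<in> S \<and> (\<forall>k\<in>S.
      continuous_on UNIV (\<lambda>p. k (fst p) (snd p)) \<and>
      (\<forall>a b. (\<lambda>s. k s b) differentiable (at a) \<and> (\<lambda>t. k a t) differentiable (at b)) \<and>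
      (\<lambda>a b. deriv (\<lambda>s. k s b) a) \<in> S \<and> (\<lambda>a b. deriv (\<lambda>t. k a t) b) \<in> S))"

definition ux :: "(int \<Rightarrow> real) \<Rightarrow> real \<Rightarrow> int \<Rightarrow> real" where
  "ux U h i = (U (i+1) - U (i-1)) / (2*h)"

definition uxx :: "(int \<Rightarrow> real) \<Rightarrow> real \<Rightarrow> int \<Rightarrow> real" where
  "uxx U h i = (ux U h (i+1) - ux U h (i-1)) / (2*h)"

text \<open>Face i+1/2: j = i, k = i+1.\<close>
definition TL :: "(int \<Rightarrow> real) \<Rightarrow> real \<Rightarrow> int \<Rightarrow> real" where
  "TL U h i = h/4 * (ux U h (i+1) - ux U h i) - h^2/4 * uxx U h i"

definition TR :: "(int \<Rightarrow> real) \<Rightarrow> real \<Rightarrow> int \<Rightarrow> real" where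
  "TR U h i = h/4 * (ux U h (i+1) - ux U h i) - h^2/4 * uxx U h (i+1)"

definition uL :: "real \<Rightarrow> real \<Rightarrow> (int \<Rightarrow> real) \<Rightarrow> real \<Rightarrow> int \<Rightarrow> real" where
  "uL \<kappa> \<kappa>3 U h i = \<kappa> * (U i + U (i+1)) / 2 + (1 - \<kappa>) * (U i + h/2 * ux U h i) + \<kappa>3 * TL U h i"

definition uR :: "real \<Rightarrow> real \<Rightarrow> (int \<Rightarrow> real) \<Rightarrow> real \<Rightarrow> int \<Rightarrow> real" where
  "uR \<kappa> \<kappa>3 U h i = \<kappa> * (U i + U (i+1)) / 2 + (1 - \<kappa>) * (U (i+1) - h/2 * ux U h (i+1)) + \<kappa>3 * TR U h i"

definition fL :: "real \<Rightarrow> (real \<Rightarrow> real) \<Rightarrow> (int \<Rightarrow> real) \<Rightarrow> real \<Rightarrow> int \<Rightarrow> real" where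
  "fL \<theta> f U h i = \<theta> * (f (U i) + f (U (i+1))) / 2
      + (1 - \<theta>) * (f (U i) + deriv f (U i) * (h/2) * ux U h i)"

definition fR :: "real \<Rightarrow> (real \<Rightarrow> real) \<Rightarrow> (int \<Rightarrow> real) \<Rightarrow> real \<Rightarrow> int \<Rightarrow> real" where
  "fR \<theta> f U h i = \<theta> * (f (U i) + f (U (i+1))) / 2
      + (1 - \<theta>) * (f (U (i+1)) - deriv f (U (i+1)) * (h/2) * ux U h (i+1))"

text \<open>Numerical flux at face i+1/2.\<close>
definition Phi :: "real \<Rightarrow> real \<Rightarrow> real \<Rightarrow> (real \<Rightarrow> real) \<Rightarrow> (real \<Rightarrow> real \<Rightarrow> real)
    \<Rightarrow> (int \<Rightarrow> real) \<Rightarrow> real \<Rightarrow> int \<Rightarrow> real" where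
  "Phi \<kappa> \<kappa>3 \<theta> f Dbar U h i =
     (fL \<theta> f U h i + fR \<theta> f U h i) / 2
     - Dbar (U i) (U (i+1)) * (uR \<kappa> \<kappa>3 U h i - uL \<kappa> \<kappa>3 U h i) / 2"

definition CFSR_err :: "real \<Rightarrow> real \<Rightarrow> real \<Rightarrow> (real \<Rightarrow> real) \<Rightarrow> (real \<Rightarrow> real \<Rightarrow> real)
    \<Rightarrow> (real \<Rightarrow> real) \<Rightarrow> real \<Rightarrow> real \<Rightarrow> real" where
  "CFSR_err \<kappa> \<kappa>3 \<theta> f Dbar u x h =
     (let U = (\<lambda>i::int. u (x + of_int i * h)) in
      (Phi \<kappa> \<kappa>3 \<theta> f Dbar U h 0 - Phi \<kappa> \<kappa>3 \<theta> f Dbar U h (-1)) / h)"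

end

(* Expand every nodal value u (x + k h) by Taylor's theorem about x; then h times the truncation
   error is a polynomial in h up to O(h^5).  With g = f o u, the averaged fluxes give the central
   difference (g (x + h) - g (x - h)) / 2 = g' h + g''' h^3 / 6 + O(h^5), and the chain-rule
   correction adds -(1 - theta) / 4 g''' h^3 + O(h^5).  The jump u_R - u_L at the face i + 1/2 is a
   six-point stencil annihilating quadratics, so it equals
   -(1 - kappa + kappa3) / 4 (u''' h^3 + (i + 1/2) u'''' h^4) + O(h^5).  By symmetry both face
   coefficients are values psi (x +- h) of psi y = Dbar (u x) (u y), and 2 psi' (x) = (D o u)' (x)
   because D is the diagonal of the symmetric Dbar.  Hence the dissipation contributes
   (1 - kappa + kappa3) / 8 ((D o u)' u''' + D u'''') h^4; dividing by h gives one expansion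
   covering both claims. *)

theory Submission
  imports Defs
begin

section \<open>Smooth functions of one variable\<close>

fun differentiable_upto :: "nat \<Rightarrow> (real \<Rightarrow> real) \<Rightarrow> bool" where
  "differentiable_upto 0 g \<longleftrightarrow> (\<forall>x. g differentiable (at x))"
| "differentiable_upto (Suc m) g \<longleftrightarrow> (\<forall>x. g differentiable (at x)) \<and> differentiable_upto m (deriv g)"

lemma differentiable_upto_iff:
  "differentiable_upto m g \<longleftrightarrow> (\<forall>j\<le>m. \<forall>x. (deriv ^^ j) g differentiable (at x))"
proof (induction m arbitrary: g)
  case (Suc m)
  have "(\<forall>j\<le>Suc m. P j) \<longleftrightarrow> P 0 \<and> (\<forall>j\<le>m. P (Suc j))" for P :: "nat \<Rightarrow> bool"
    by (metis Suc_le_mono le0 not0_implies_Suc)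
  then show ?case
    using Suc.IH[of "deriv g"] by (simp add: funpow_Suc_right del: funpow.simps)
qed simp

lemma smooth1_iff_differentiable_upto: "smooth1 g \<longleftrightarrow> (\<forall>m. differentiable_upto m g)"
  unfolding smooth1_def differentiable_upto_iff by blast

lemma differentiable_upto_imp_DERIV:
  "differentiable_upto m g \<Longrightarrow> (g has_real_derivative deriv g x) (at x)"
  by (cases m) (auto simp: DERIV_deriv_iff_real_differentiable)

lemma differentiable_upto_Suc_imp: "differentiable_upto (Suc m) g \<Longrightarrow> differentiable_upto m g"
  by (induction m arbitrary: g) auto

lemma differentiable_upto_add:
  "differentiable_upto m a \<Longrightarrow> differentiable_upto m b \<Longrightarrow> differentiable_upto m (\<lambda>x. a x + b x)"
proof (induction m arbitrary: a b)
  case (Suc m)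
  note a = differentiable_upto_imp_DERIV[OF Suc.prems(1)]
    and b = differentiable_upto_imp_DERIV[OF Suc.prems(2)]
  have "deriv (\<lambda>x. a x + b x) = (\<lambda>x. deriv a x + deriv b x)"
    by (rule ext, rule DERIV_imp_deriv, rule DERIV_add[OF a b])
  moreover have "differentiable_upto m (\<lambda>x. deriv a x + deriv b x)"
    using Suc.prems by (intro Suc.IH) simp_all
  ultimately show ?case
    using Suc.prems by simp
qed simp

lemma differentiable_upto_mult:
  "differentiable_upto m a \<Longrightarrow> differentiable_upto m b \<Longrightarrow> differentiable_upto m (\<lambda>x. a x * b x)"
proof (induction m arbitrary: a b)
  case (Suc m)
  note a = differentiable_upto_imp_DERIV[OF Suc.prems(1)]
    and b = differentiable_upto_imp_DERIV[OF Suc.prems(2)]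
  have deriv_ab: "deriv (\<lambda>x. a x * b x) = (\<lambda>x. a x * deriv b x + deriv a x * b x)"
    by (rule ext, rule DERIV_imp_deriv, rule DERIV_mult'[OF a b])
  have "differentiable_upto m a" "differentiable_upto m (deriv a)"
    "differentiable_upto m b" "differentiable_upto m (deriv b)"
    using Suc.prems differentiable_upto_Suc_imp[OF Suc.prems(1)]
      differentiable_upto_Suc_imp[OF Suc.prems(2)] by simp_all
  then have "differentiable_upto m (\<lambda>x. a x * deriv b x + deriv a x * b x)"
    by (intro differentiable_upto_add Suc.IH)
  with deriv_ab Suc.prems show ?case by simp
qed simp

lemma differentiable_upto_compose:
  "differentiable_upto m f \<Longrightarrow> differentiable_upto m g \<Longrightarrow> differentiable_upto m (\<lambda>x. f (g x))"
proof (induction m arbitrary: f g)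
  case 0
  then show ?case by (auto intro: differentiable_chain_at[unfolded o_def])
next
  case (Suc m)
  note f = differentiable_upto_imp_DERIV[OF Suc.prems(1)]
    and g = differentiable_upto_imp_DERIV[OF Suc.prems(2)]
  have deriv_fg: "deriv (\<lambda>x. f (g x)) = (\<lambda>x. deriv f (g x) * deriv g x)"
    by (rule ext, rule DERIV_imp_deriv, rule DERIV_chain2[OF f g])
  have "differentiable_upto m (deriv f)" "differentiable_upto m g" "differentiable_upto m (deriv g)"
    using Suc.prems differentiable_upto_Suc_imp[OF Suc.prems(2)] by simp_all
  then have "differentiable_upto m (\<lambda>x. deriv f (g x) * deriv g x)"
    using Suc.IH[of "deriv f" g] differentiable_upto_mult by blast
  moreover have "(\<lambda>x. f (g x)) differentiable (at x)" for x
    using DERIV_chain2[OF f g] real_differentiable_def by blast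
  ultimately show ?case
    using deriv_fg by simp
qed

lemma smooth1_compose: "smooth1 f \<Longrightarrow> smooth1 g \<Longrightarrow> smooth1 (\<lambda>x. f (g x))"
  by (simp add: smooth1_iff_differentiable_upto differentiable_upto_compose)

lemma smooth1_deriv: "smooth1 g \<Longrightarrow> smooth1 (deriv g)"
  by (metis differentiable_upto.simps(2) smooth1_iff_differentiable_upto)

lemma smooth1_DERIV_funpow:
  "smooth1 g \<Longrightarrow> ((deriv ^^ n) g has_real_derivative (deriv ^^ Suc n) g x) (at x)"
  unfolding smooth1_def by (simp add: DERIV_deriv_iff_real_differentiable)

lemma smooth1_DERIV: "smooth1 g \<Longrightarrow> (g has_real_derivative deriv g x) (at x)"
  using smooth1_DERIV_funpow[of g 0] by simp

lemma smooth1_deriv_mult2: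
  assumes "smooth1 a" "smooth1 b"
  shows "(deriv ^^ 2) (\<lambda>y. a y * b y) x
    = (deriv ^^ 2) a x * b x + 2 * deriv a x * deriv b x + a x * (deriv ^^ 2) b x"
proof -
  note a = smooth1_DERIV[OF assms(1)] smooth1_DERIV[OF smooth1_deriv[OF assms(1)]]
  note b = smooth1_DERIV[OF assms(2)] smooth1_DERIV[OF smooth1_deriv[OF assms(2)]]
  have twice: "(deriv ^^ 2) F = deriv (deriv F)" for F :: "real \<Rightarrow> real"
    by (simp add: numeral_2_eq_2)
  have first: "deriv (\<lambda>y. a y * b y) = (\<lambda>y. a y * deriv b y + deriv a y * b y)"
    by (rule ext, rule DERIV_imp_deriv, rule DERIV_mult'[OF a(1) b(1)])
  have second: "deriv (\<lambda>y. a y * deriv b y + deriv a y * b y) x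
      = (a x * deriv (deriv b) x + deriv a x * deriv b x) + (deriv a x * deriv b x + deriv (deriv a) x * b x)"
    by (rule DERIV_imp_deriv, intro DERIV_add DERIV_mult' a b)
  show ?thesis
    unfolding twice first second by algebra
qed

lemma deriv3_compose:
  assumes f: "smooth1 f" and u: "smooth1 u"
  shows "(deriv ^^ 3) (\<lambda>y. f (u y)) x
    = (deriv ^^ 2) (\<lambda>y. deriv f (u y)) x * deriv u x
      + 2 * deriv (\<lambda>y. deriv f (u y)) x * (deriv ^^ 2) u x + deriv f (u x) * (deriv ^^ 3) u x"
proof -
  have "deriv (\<lambda>y. f (u y)) = (\<lambda>y. deriv f (u y) * deriv u y)"
    by (rule ext, rule DERIV_imp_deriv, rule DERIV_chain2[OF smooth1_DERIV[OF f] smooth1_DERIV[OF u]])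
  moreover have "(deriv ^^ 3) g = (deriv ^^ 2) (deriv g)" "deriv (deriv g) = (deriv ^^ 2) g"
    for g :: "real \<Rightarrow> real"
    by (metis comp_apply funpow_Suc_right numeral_3_eq_3 numeral_2_eq_2 funpow_0)+
  ultimately show ?thesis
    using smooth1_deriv_mult2[OF smooth1_compose[OF smooth1_deriv[OF f] u] smooth1_deriv[OF u]]
    by simp
qed

section \<open>Symmetric functions of two variables\<close>

lemma has_real_derivative_diagonal:
  fixes F F2 :: "real \<Rightarrow> real \<Rightarrow> real"
  assumes sym: "\<And>s t. F s t = F t s"
    and partial: "\<And>s t. (F s has_real_derivative F2 s t) (at t)"
    and cont: "isCont (\<lambda>p. F2 (fst p) (snd p)) (a, a)"
  shows "((\<lambda>t. F t t) has_real_derivative 2 * F2 a a) (at a)"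
proof -
  \<comment> \<open>Continuity of the second partial makes F jointly differentiable at (a, a), and symmetry
    identifies the first partial with the second.\<close>
  have "(\<lambda>s. F s a) = F a"
    by (rule ext, rule sym)
  then have fx: "((\<lambda>s. F s a) has_derivative (*) (F2 a a)) (at a)"
    using partial[of a a] by (simp add: has_field_derivative_def)
  have fy: "((\<lambda>t. F s t) has_derivative blinfun_apply (blinfun_mult_right (F2 s t))) (at t within UNIV)"
    for s t using partial[of s t] by (simp add: has_field_derivative_def)
  have "continuous (at (a, a)) (\<lambda>p. blinfun_mult_right (F2 (fst p) (snd p)))"
    using cont by (intro bounded_linear.continuous[OF bounded_linear_blinfun_mult_right])
  then have fy_cont: "continuous (at (a, a) within UNIV \<times> UNIV) (\<lambda>(s, t). blinfun_mult_right (F2 s t))"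
    by (simp add: case_prod_beta')
  have "((\<lambda>(s, t). F s t) has_derivative (\<lambda>(ds, dt). F2 a a * ds + F2 a a * dt)) (at (a, a))"
    using has_derivative_partialsI[OF fx fy fy_cont UNIV_I convex_UNIV] by simp
  from has_derivative_compose[OF has_derivative_Pair[OF has_derivative_ident has_derivative_ident] this]
  have "((\<lambda>t. F t t) has_derivative (\<lambda>dt. F2 a a * dt + F2 a a * dt)) (at a)"
    by simp
  moreover have "(\<lambda>dt. F2 a a * dt + F2 a a * dt) = (*) (2 * F2 a a)"
    by (simp add: fun_eq_iff algebra_simps)
  ultimately show ?thesis
    by (simp add: has_field_derivative_def)
qed

lemma smooth2_smooth1_partial:
  assumes "smooth2 F"
  shows "smooth1 (F a)"
proof -
  obtain S where "F \<in> S" and S: "\<And>k. k \<in> S \<Longrightarrow>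
      (\<forall>a b. (\<lambda>t. k a t) differentiable (at b)) \<and> (\<lambda>a b. deriv (\<lambda>t. k a t) b) \<in> S"
    using assms unfolding smooth2_def by blast
  have iter: "(\<lambda>a b. (deriv ^^ n) (F a) b) \<in> S" for n
  proof (induction n)
    case (Suc n)
    then show ?case
      using S[of "\<lambda>a b. (deriv ^^ n) (F a) b"] by simp
  qed (simp add: \<open>F \<in> S\<close>)
  show ?thesis
    unfolding smooth1_def using S[OF iter] by simp
qed

lemma smooth2_isCont_partial:
  assumes "smooth2 F"
  shows "isCont (\<lambda>p. deriv (F (fst p)) (snd p)) z"
proof -
  obtain S where "F \<in> S" and S: "\<And>k. k \<in> S \<Longrightarrow>
      continuous_on UNIV (\<lambda>p. k (fst p) (snd p)) \<and> (\<lambda>a b. deriv (\<lambda>t. k a t) b) \<in> S"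
    using assms unfolding smooth2_def by blast
  have "continuous_on UNIV (\<lambda>p. deriv (F (fst p)) (snd p))"
    using S[OF S[OF \<open>F \<in> S\<close>, THEN conjunct2]] by simp
  then show ?thesis
    by (cases z) (simp add: continuous_on_eq_continuous_at)
qed

lemma deriv_symmetric_diagonal_compose:
  assumes F: "smooth2 F" and sym: "\<And>a b. F a b = F b a" and u: "smooth1 u"
  shows "deriv (\<lambda>y. F (u y) (u y)) x = 2 * deriv (\<lambda>y. F (u x) (u y)) x"
proof -
  have "((\<lambda>t. F t t) has_real_derivative 2 * deriv (F (u x)) (u x)) (at (u x))"
    using sym smooth1_DERIV[OF smooth2_smooth1_partial[OF F]] smooth2_isCont_partial[OF F]
    by (rule has_real_derivative_diagonal)
  then have "deriv (\<lambda>y. F (u y) (u y)) x = 2 * deriv (F (u x)) (u x) * deriv u x"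
    by (intro DERIV_imp_deriv DERIV_chain2[OF _ smooth1_DERIV[OF u]])
  moreover have "deriv (\<lambda>y. F (u x) (u y)) x = deriv (F (u x)) (u x) * deriv u x"
    by (intro DERIV_imp_deriv DERIV_chain2[OF smooth1_DERIV[OF smooth2_smooth1_partial[OF F]]
          smooth1_DERIV[OF u]])
  ultimately show ?thesis
    by simp
qed

section \<open>Big-O calculus at 0\<close>

lemma bigo_1_at_0_if_isCont: "isCont p 0 \<Longrightarrow> p \<in> O[at 0](\<lambda>_. 1)"
  by (rule bigoI_tendsto[where c = "p 0"]) (simp_all add: isCont_def)

lemma bigo_const_mult: "f \<in> O[F](g) \<Longrightarrow> (\<lambda>x. c * f x) \<in> O[F](g)"
  by simp

lemma bigo_power_mult:
  assumes "f \<in> O[F](\<lambda>h. h ^ m)" "g \<in> O[F](\<lambda>h. h ^ n)" "m + n = k"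
  shows "(\<lambda>h. f h * g h) \<in> O[F](\<lambda>h. h ^ k)"
  using landau_o.big.mult[OF assms(1,2)] assms(3)[symmetric] by (simp add: power_add)

lemma power_bigo_power_at_0:
  assumes "m \<le> n" shows "(\<lambda>h::real. h ^ n) \<in> O[at 0](\<lambda>h. h ^ m)"
proof -
  have "(\<lambda>h::real. h ^ m * h ^ (n - m)) \<in> O[at 0](\<lambda>h. h ^ m)"
    by (intro landau_o.big_1_mult landau_o.big_refl bigo_1_at_0_if_isCont continuous_intros)
  then show ?thesis
    using assms by (simp add: power_add[symmetric])
qed

lemma bigo_at_0_cong:
  assumes "\<And>h. h \<noteq> 0 \<Longrightarrow> f h = g h" and "g \<in> O[at 0](k)"
  shows "f \<in> O[at 0](k)"
proof -
  have "\<forall>\<^sub>F h in at 0. f h = g h"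
    using assms(1) by (simp add: eventually_at_filter)
  with assms(2) show ?thesis
    using landau_o.big.in_cong by blast
qed

lemma bigo_at_0_divide:
  assumes "f \<in> O[at 0](\<lambda>h. h ^ Suc n)"
  shows "(\<lambda>h. f h / h) \<in> O[at 0](\<lambda>h::real. h ^ n)"
proof -
  have "(\<lambda>h::real. h ^ Suc n) = (\<lambda>h. h ^ n * h)"
    by (simp add: fun_eq_iff)
  with assms show ?thesis
    using landau_o.big.divide_eq2[of "\<lambda>h. h" "at (0::real)" f "\<lambda>h. h ^ n"]
    by (simp add: eventually_at_filter)
qed

lemma bigo_cubic_if_expansion:
  fixes W :: "real \<Rightarrow> real"
  assumes "(\<lambda>h. W h - (A * h ^ 3 + B * h ^ 4)) \<in> O[at 0](\<lambda>h. h ^ 5)"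
  shows "W \<in> O[at 0](\<lambda>h. h ^ 3)"
proof -
  have "(\<lambda>h::real. h ^ 5) \<in> O[at 0](\<lambda>h. h ^ 3)"
    by (rule power_bigo_power_at_0) simp
  with assms have "(\<lambda>h. W h - (A * h ^ 3 + B * h ^ 4)) \<in> O[at 0](\<lambda>h. h ^ 3)"
    by (rule landau_o.big.trans)
  moreover have "(\<lambda>h. h ^ 3 * (A + B * h)) \<in> O[at 0](\<lambda>h. h ^ 3)"
    by (intro landau_o.big_1_mult[OF landau_o.big_refl] bigo_1_at_0_if_isCont continuous_intros)
  ultimately have "(\<lambda>h. (W h - (A * h ^ 3 + B * h ^ 4)) + h ^ 3 * (A + B * h)) \<in> O[at 0](\<lambda>h. h ^ 3)"
    by (rule sum_in_bigo)
  moreover have "(\<lambda>h. (W h - (A * h ^ 3 + B * h ^ 4)) + h ^ 3 * (A + B * h)) = W"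
    by (simp add: fun_eq_iff algebra_simps eval_nat_numeral)
  ultimately show ?thesis
    by simp
qed

section \<open>Taylor expansions\<close>

definition taylor_poly :: "(real \<Rightarrow> real) \<Rightarrow> nat \<Rightarrow> real \<Rightarrow> real \<Rightarrow> real" where
  "taylor_poly g n x t = (\<Sum>k<n. (deriv ^^ k) g x / fact k * t ^ k)"

lemma taylor_remainder_bigo:
  assumes g: "smooth1 g"
  shows "(\<lambda>h. g (x + c * h) - taylor_poly g n x (c * h)) \<in> O[at 0](\<lambda>h. h ^ n)"
proof -
  have "compact ((deriv ^^ n) g ` cball x \<bar>c\<bar>)"
    using g by (intro compact_continuous_image continuous_at_imp_continuous_on ballI
        DERIV_isCont[OF smooth1_DERIV_funpow]) auto
  then obtain M where M: "\<And>t. t \<in> cball x \<bar>c\<bar> \<Longrightarrow> \<bar>(deriv ^^ n) g t\<bar> \<le> M"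
    by (fastforce dest: compact_imp_bounded simp: bounded_iff)
  have "\<bar>g (x + c * h) - (\<Sum>k<n. (deriv ^^ k) g x / fact k * (c * h) ^ k)\<bar>
          \<le> M / fact n * \<bar>c\<bar> ^ n * \<bar>h ^ n\<bar>" if "\<bar>h\<bar> \<le> 1" for h
  proof -
    have "\<forall>m t. m < n \<and> \<bar>t\<bar> \<le> \<bar>c * h\<bar> \<longrightarrow>
        ((\<lambda>t. (deriv ^^ m) g (x + t)) has_real_derivative (deriv ^^ Suc m) g (x + t)) (at t)"
      using smooth1_DERIV_funpow[OF g] by (auto simp: DERIV_shift[symmetric] add.commute)
    from Maclaurin_bi_le[of "\<lambda>m t. (deriv ^^ m) g (x + t)", OF refl this]
    obtain t where t: "\<bar>t\<bar> \<le> \<bar>c * h\<bar>"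
      and eq: "g (x + c * h) = (\<Sum>k<n. (deriv ^^ k) g x / fact k * (c * h) ^ k)
                 + (deriv ^^ n) g (x + t) / fact n * (c * h) ^ n"
      by auto
    have "\<bar>t\<bar> \<le> \<bar>c\<bar>"
      using t that by (metis abs_mult mult.commute mult_left_le order_trans abs_ge_zero)
    then have "\<bar>(deriv ^^ n) g (x + t)\<bar> \<le> M"
      by (intro M) (simp add: dist_real_def)
    then show ?thesis
      unfolding eq by (simp add: abs_mult power_abs power_mult_distrib mult.assoc)
        (intro divide_right_mono mult_right_mono; simp)
  qed
  then have "\<forall>\<^sub>F h in at 0. norm (g (x + c * h) - (\<Sum>k<n. (deriv ^^ k) g x / fact k * (c * h) ^ k))
               \<le> M / fact n * \<bar>c\<bar> ^ n * norm (h ^ n)"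
    unfolding eventually_at_le by (intro exI[of _ 1]) (simp add: dist_real_def)
  then show ?thesis
    unfolding taylor_poly_def by (rule bigoI)
qed

lemma isCont_taylor_poly: "isCont (\<lambda>h. taylor_poly g n x (c * h)) a"
  unfolding taylor_poly_def by (intro continuous_intros)

lemma central_difference_expansion:
  assumes "smooth1 g"
  shows "(\<lambda>h. (g (x + h) - g (x - h)) / 2 - (deriv g x * h + (deriv ^^ 3) g x / 6 * h ^ 3))
           \<in> O[at 0](\<lambda>h. h ^ 5)"
proof -
  have "(\<lambda>h. (g (x + 1 * h) - taylor_poly g 5 x (1 * h)) - (g (x + -1 * h) - taylor_poly g 5 x (-1 * h)))
      \<in> O[at 0](\<lambda>h. h ^ 5)" (is "?R \<in> _")
    using assms by (intro sum_in_bigo taylor_remainder_bigo)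
  moreover have "(\<lambda>h. (g (x + h) - g (x - h)) / 2 - (deriv g x * h + (deriv ^^ 3) g x / 6 * h ^ 3))
      = (\<lambda>h. ?R h / 2)"
    by (simp add: fun_eq_iff taylor_poly_def lessThan_nat_numeral fact_numeral field_simps)
  ultimately show ?thesis
    by simp
qed

lemma flux_correction_expansion:
  assumes q: "smooth1 q" and u: "smooth1 u"
  shows "(\<lambda>h. 2 * q x * (u (x + h) - u (x - h)) - q (x + h) * (u (x + 2 * h) - u x)
             - q (x - h) * (u x - u (x - 2 * h))
             + 2 * ((deriv ^^ 2) q x * deriv u x + 2 * deriv q x * (deriv ^^ 2) u x
                    + q x * (deriv ^^ 3) u x) * h ^ 3)
           \<in> O[at 0](\<lambda>h. h ^ 5)"
proof -
  define Ru where "Ru c h = u (x + c * h) - taylor_poly u 5 x (c * h)" for c h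
  define Rq where "Rq c h = q (x + c * h) - taylor_poly q 4 x (c * h)" for c h
  \<comment> \<open>The degree 5 and 7 terms left over when the Taylor polynomials are inserted.\<close>
  define rest where "rest h = - (2/3 * (deriv ^^ 2) u x * (deriv ^^ 3) q x
      + 4/3 * (deriv ^^ 3) u x * (deriv ^^ 2) q x + 4/3 * (deriv ^^ 4) u x * deriv q x)
      - 2/9 * h ^ 2 * (deriv ^^ 4) u x * (deriv ^^ 3) q x" for h
  have Ru: "Ru c \<in> O[at 0](\<lambda>h. h ^ 5)" for c
    unfolding Ru_def[abs_def] using u by (rule taylor_remainder_bigo)
  have Rq: "Rq c \<in> O[at 0](\<lambda>h. h ^ 4)" for c
    unfolding Rq_def[abs_def] using q by (rule taylor_remainder_bigo)
  have du: "(\<lambda>h. u (x + c * h) - u x) \<in> O[at 0](\<lambda>h. h ^ 1)" for c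
    using taylor_remainder_bigo[OF u, of x c 1] by (simp add: taylor_poly_def)
  have Q: "(\<lambda>h. taylor_poly q 4 x (c * h)) \<in> O[at 0](\<lambda>_. 1)" for c
    by (intro bigo_1_at_0_if_isCont isCont_taylor_poly)
  have rest: "rest \<in> O[at 0](\<lambda>_. 1)"
    unfolding rest_def[abs_def] by (intro bigo_1_at_0_if_isCont continuous_intros)
  have "2 * q x * (u (x + h) - u (x - h)) - q (x + h) * (u (x + 2 * h) - u x)
             - q (x - h) * (u x - u (x - 2 * h))
             + 2 * ((deriv ^^ 2) q x * deriv u x + 2 * deriv q x * (deriv ^^ 2) u x
                    + q x * (deriv ^^ 3) u x) * h ^ 3
      = 2 * q x * (Ru 1 h - Ru (-1) h)
        - (Rq 1 h * (u (x + 2 * h) - u x) + Ru 2 h * taylor_poly q 4 x (1 * h))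
        + (Rq (-1) h * (u (x + -2 * h) - u x) + Ru (-2) h * taylor_poly q 4 x (-1 * h))
        + h ^ 5 * rest h" for h
    unfolding Ru_def Rq_def rest_def taylor_poly_def
    by (simp add: lessThan_nat_numeral fact_numeral field_simps) algebra
  moreover have "(\<lambda>h. 2 * q x * (Ru 1 h - Ru (-1) h)
        - (Rq 1 h * (u (x + 2 * h) - u x) + Ru 2 h * taylor_poly q 4 x (1 * h))
        + (Rq (-1) h * (u (x + -2 * h) - u x) + Ru (-2) h * taylor_poly q 4 x (-1 * h))
        + h ^ 5 * rest h) \<in> O[at 0](\<lambda>h. h ^ 5)"
    by (intro sum_in_bigo bigo_const_mult Ru bigo_power_mult[OF Rq du] landau_o.big_1_mult[OF Ru Q]
        landau_o.big_1_mult[OF landau_o.big_refl rest]) simp_all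
  ultimately show ?thesis
    by simp
qed

lemma dissipation_expansion:
  assumes \<psi>: "smooth1 \<psi>"
    and Wp: "(\<lambda>h. Wp h - (A * h ^ 3 + Bp * h ^ 4)) \<in> O[at 0](\<lambda>h. h ^ 5)"
    and Wm: "(\<lambda>h. Wm h - (A * h ^ 3 + Bm * h ^ 4)) \<in> O[at 0](\<lambda>h. h ^ 5)"
  shows "(\<lambda>h. \<psi> (x + h) * Wp h - \<psi> (x - h) * Wm h
             - (2 * deriv \<psi> x * A + \<psi> x * (Bp - Bm)) * h ^ 4) \<in> O[at 0](\<lambda>h. h ^ 5)"
proof -
  define R where "R c h = \<psi> (x + c * h) - taylor_poly \<psi> 2 x (c * h)" for c h
  have R: "R c \<in> O[at 0](\<lambda>h. h ^ 2)" for c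
    unfolding R_def[abs_def] using \<psi> by (rule taylor_remainder_bigo)
  have lin: "(\<lambda>h. \<psi> x + c * deriv \<psi> x * h) \<in> O[at 0](\<lambda>_. 1)" for c
    by (intro bigo_1_at_0_if_isCont continuous_intros)
  have "\<psi> (x + h) * Wp h - \<psi> (x - h) * Wm h - (2 * deriv \<psi> x * A + \<psi> x * (Bp - Bm)) * h ^ 4
      = R 1 h * Wp h + (Wp h - (A * h ^ 3 + Bp * h ^ 4)) * (\<psi> x + 1 * deriv \<psi> x * h)
        - R (-1) h * Wm h - (Wm h - (A * h ^ 3 + Bm * h ^ 4)) * (\<psi> x + -1 * deriv \<psi> x * h)
        + h ^ 5 * (deriv \<psi> x * (Bp + Bm))" for h
    unfolding R_def taylor_poly_def
    by (simp add: lessThan_nat_numeral field_simps) algebra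
  moreover have "(\<lambda>h. R 1 h * Wp h + (Wp h - (A * h ^ 3 + Bp * h ^ 4)) * (\<psi> x + 1 * deriv \<psi> x * h)
        - R (-1) h * Wm h - (Wm h - (A * h ^ 3 + Bm * h ^ 4)) * (\<psi> x + -1 * deriv \<psi> x * h)
        + h ^ 5 * (deriv \<psi> x * (Bp + Bm))) \<in> O[at 0](\<lambda>h. h ^ 5)"
    by (intro sum_in_bigo bigo_power_mult[OF R bigo_cubic_if_expansion[OF Wp]]
        bigo_power_mult[OF R bigo_cubic_if_expansion[OF Wm]] landau_o.big_1_mult[OF Wp lin]
        landau_o.big_1_mult[OF Wm lin] landau_o.big_1_mult[OF landau_o.big_refl] bigo_const) simp_all
  ultimately show ?thesis
    by simp
qed

section \<open>The CFSR scheme\<close>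

definition grid :: "(real \<Rightarrow> real) \<Rightarrow> real \<Rightarrow> real \<Rightarrow> int \<Rightarrow> real" where
  "grid u x h i = u (x + of_int i * h)"

lemma uR_minus_uL:
  assumes "h \<noteq> 0"
  shows "uR \<kappa> \<kappa>3 U h i - uL \<kappa> \<kappa>3 U h i
    = (1 - \<kappa>) / 4 * (3 * U (i + 1) - 3 * U i + U (i - 1) - U (i + 2))
      - \<kappa>3 / 16 * ((U (i + 3) - 2 * U (i + 1) + U (i - 1)) - (U (i + 2) - 2 * U i + U (i - 2)))"
  using assms unfolding uR_def uL_def TL_def TR_def uxx_def ux_def
  by (simp add: field_simps power2_eq_square)

lemma flux_average_difference:
  assumes "h \<noteq> 0"
  shows "(fL \<theta> f U h 0 + fR \<theta> f U h 0) / 2 - (fL \<theta> f U h (-1) + fR \<theta> f U h (-1)) / 2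
    = (f (U 1) - f (U (-1))) / 2
      + (1 - \<theta>) / 8 * (2 * deriv f (U 0) * (U 1 - U (-1))
          - deriv f (U 1) * (U 2 - U 0) - deriv f (U (-1)) * (U 0 - U (-2)))"
  using assms unfolding fL_def fR_def ux_def
  by (simp add: field_simps)

lemma CFSR_err_eq:
  assumes "h \<noteq> 0"
  shows "CFSR_err \<kappa> \<kappa>3 \<theta> f Dbar u x h
    = ((f (u (x + h)) - f (u (x - h))) / 2
      + (1 - \<theta>) / 8 * (2 * deriv f (u x) * (u (x + h) - u (x - h))
          - deriv f (u (x + h)) * (u (x + 2 * h) - u x) - deriv f (u (x - h)) * (u x - u (x - 2 * h)))
      - (Dbar (u x) (u (x + h)) * (uR \<kappa> \<kappa>3 (grid u x h) h 0 - uL \<kappa> \<kappa>3 (grid u x h) h 0)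
         - Dbar (u (x - h)) (u x) * (uR \<kappa> \<kappa>3 (grid u x h) h (-1) - uL \<kappa> \<kappa>3 (grid u x h) h (-1))) / 2) / h"
proof -
  have "CFSR_err \<kappa> \<kappa>3 \<theta> f Dbar u x h
      = (Phi \<kappa> \<kappa>3 \<theta> f Dbar (grid u x h) h 0 - Phi \<kappa> \<kappa>3 \<theta> f Dbar (grid u x h) h (-1)) / h"
    unfolding CFSR_err_def grid_def[abs_def] Let_def ..
  also have "Phi \<kappa> \<kappa>3 \<theta> f Dbar (grid u x h) h 0 - Phi \<kappa> \<kappa>3 \<theta> f Dbar (grid u x h) h (-1)
      = (fL \<theta> f (grid u x h) h 0 + fR \<theta> f (grid u x h) h 0) / 2
        - (fL \<theta> f (grid u x h) h (-1) + fR \<theta> f (grid u x h) h (-1)) / 2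
      - (Dbar (u x) (u (x + h)) * (uR \<kappa> \<kappa>3 (grid u x h) h 0 - uL \<kappa> \<kappa>3 (grid u x h) h 0)
         - Dbar (u (x - h)) (u x) * (uR \<kappa> \<kappa>3 (grid u x h) h (-1) - uL \<kappa> \<kappa>3 (grid u x h) h (-1))) / 2"
    unfolding Phi_def by (simp add: grid_def field_simps)
  finally show ?thesis
    using assms by (simp add: flux_average_difference grid_def)
qed

lemma face_jump_expansion:
  assumes u: "smooth1 u"
  shows "(\<lambda>h. uR \<kappa> \<kappa>3 (grid u x h) h i - uL \<kappa> \<kappa>3 (grid u x h) h i
             - (- (1 - \<kappa> + \<kappa>3) / 4 * (deriv ^^ 3) u x * h ^ 3
                + - (1 - \<kappa> + \<kappa>3) / 4 * (of_int i + 1 / 2) * (deriv ^^ 4) u x * h ^ 4))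
           \<in> O[at 0](\<lambda>h. h ^ 5)"
proof -
  define R where "R k h = u (x + (of_int i + k) * h) - taylor_poly u 5 x ((of_int i + k) * h)" for k h
  have R: "R k \<in> O[at 0](\<lambda>h. h ^ 5)" for k
    unfolding R_def[abs_def] using u by (rule taylor_remainder_bigo)
  have "uR \<kappa> \<kappa>3 (grid u x h) h i - uL \<kappa> \<kappa>3 (grid u x h) h i
             - (- (1 - \<kappa> + \<kappa>3) / 4 * (deriv ^^ 3) u x * h ^ 3
                + - (1 - \<kappa> + \<kappa>3) / 4 * (of_int i + 1 / 2) * (deriv ^^ 4) u x * h ^ 4)
      = (1 - \<kappa>) / 4 * (3 * R 1 h - 3 * R 0 h + R (-1) h - R 2 h)
        - \<kappa>3 / 16 * ((R 3 h - 2 * R 1 h + R (-1) h) - (R 2 h - 2 * R 0 h + R (-2) h))"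
    if "h \<noteq> 0" for h
    unfolding uR_minus_uL[OF that] R_def grid_def taylor_poly_def
    by (simp add: lessThan_nat_numeral fact_numeral field_simps) algebra
  moreover have "(\<lambda>h. (1 - \<kappa>) / 4 * (3 * R 1 h - 3 * R 0 h + R (-1) h - R 2 h)
        - \<kappa>3 / 16 * ((R 3 h - 2 * R 1 h + R (-1) h) - (R 2 h - 2 * R 0 h + R (-2) h)))
      \<in> O[at 0](\<lambda>h. h ^ 5)"
    by (intro sum_in_bigo bigo_const_mult R)
  ultimately show ?thesis
    by (rule bigo_at_0_cong)
qed

lemma flux_difference_expansion:
  assumes f: "smooth1 f" and u: "smooth1 u"
  shows "(\<lambda>h. (f (u (x + h)) - f (u (x - h))) / 2
      + (1 - \<theta>) / 8 * (2 * deriv f (u x) * (u (x + h) - u (x - h))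
          - deriv f (u (x + h)) * (u (x + 2 * h) - u x) - deriv f (u (x - h)) * (u x - u (x - 2 * h)))
      - (deriv (\<lambda>y. f (u y)) x * h + (3 * \<theta> - 1) / 12 * (deriv ^^ 3) (\<lambda>y. f (u y)) x * h ^ 3))
    \<in> O[at 0](\<lambda>h. h ^ 5)" (is "?E \<in> _")
proof -
  define q where "q = (\<lambda>y. deriv f (u y))"
  have "(\<lambda>h. ((f (u (x + h)) - f (u (x - h))) / 2
          - (deriv (\<lambda>y. f (u y)) x * h + (deriv ^^ 3) (\<lambda>y. f (u y)) x / 6 * h ^ 3))
      + (1 - \<theta>) / 8 * (2 * q x * (u (x + h) - u (x - h)) - q (x + h) * (u (x + 2 * h) - u x)
          - q (x - h) * (u x - u (x - 2 * h))
          + 2 * ((deriv ^^ 2) q x * deriv u x + 2 * deriv q x * (deriv ^^ 2) u x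
                 + q x * (deriv ^^ 3) u x) * h ^ 3))
      \<in> O[at 0](\<lambda>h. h ^ 5)" (is "?K \<in> _")
    unfolding q_def
    by (intro sum_in_bigo bigo_const_mult central_difference_expansion flux_correction_expansion
        smooth1_compose[OF f u] smooth1_compose[OF smooth1_deriv[OF f] u] u)
  moreover have "?E = ?K"
    by (simp add: fun_eq_iff q_def deriv3_compose[OF f u] field_simps)
  ultimately show ?thesis
    by simp
qed

lemma CFSR_err_expansion:
  assumes u: "smooth1 u" and f: "smooth1 f" and Dbar: "smooth2 Dbar"
    and sym: "\<And>a b. Dbar a b = Dbar b a"
  shows "(\<lambda>h. CFSR_err \<kappa> \<kappa>3 \<theta> f Dbar u x h
      - (deriv (\<lambda>y. f (u y)) x + (3 * \<theta> - 1) / 12 * (deriv ^^ 3) (\<lambda>y. f (u y)) x * h ^ 2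
         + (1 - \<kappa> + \<kappa>3) / 8 * (deriv (\<lambda>y. Dbar (u y) (u y)) x * (deriv ^^ 3) u x
                              + Dbar (u x) (u x) * (deriv ^^ 4) u x) * h ^ 3))
    \<in> O[at 0](\<lambda>h. h ^ 4)"
proof -
  define \<psi> where "\<psi> = (\<lambda>y. Dbar (u x) (u y))"
  define jump where "jump h i = uR \<kappa> \<kappa>3 (grid u x h) h i - uL \<kappa> \<kappa>3 (grid u x h) h i" for h i
  define A where "A = - (1 - \<kappa> + \<kappa>3) / 4 * (deriv ^^ 3) u x"
  define B where "B i = - (1 - \<kappa> + \<kappa>3) / 4 * (of_int i + 1 / 2) * (deriv ^^ 4) u x" for i :: int
  have \<psi>: "smooth1 \<psi>"
    unfolding \<psi>_def using smooth2_smooth1_partial[OF Dbar] u by (rule smooth1_compose)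
  have jump: "(\<lambda>h. jump h i - (A * h ^ 3 + B i * h ^ 4)) \<in> O[at 0](\<lambda>h. h ^ 5)" for i
    unfolding jump_def A_def B_def using u by (rule face_jump_expansion)
  have "(\<lambda>h. ((f (u (x + h)) - f (u (x - h))) / 2
      + (1 - \<theta>) / 8 * (2 * deriv f (u x) * (u (x + h) - u (x - h))
          - deriv f (u (x + h)) * (u (x + 2 * h) - u x) - deriv f (u (x - h)) * (u x - u (x - 2 * h)))
      - (deriv (\<lambda>y. f (u y)) x * h + (3 * \<theta> - 1) / 12 * (deriv ^^ 3) (\<lambda>y. f (u y)) x * h ^ 3)
      - (\<psi> (x + h) * jump h 0 - \<psi> (x - h) * jump h (-1)
          - (2 * deriv \<psi> x * A + \<psi> x * (B 0 - B (-1))) * h ^ 4) / 2) / h)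
    \<in> O[at 0](\<lambda>h. h ^ 4)"
    by (rule bigo_at_0_divide[where n = 4, simplified],
        rule sum_in_bigo(2)[OF flux_difference_expansion[OF f u]])
      (simp add: dissipation_expansion[OF \<psi> jump jump])
  moreover have "deriv (\<lambda>y. Dbar (u y) (u y)) x = 2 * deriv \<psi> x"
    unfolding \<psi>_def using Dbar sym u by (rule deriv_symmetric_diagonal_compose)
  \<comment> \<open>Symmetry turns the coefficient Dbar (u (x - h)) (u x) of the left face into \<psi> (x - h).\<close>
  ultimately show ?thesis
    by (elim bigo_at_0_cong[rotated])
      (simp add: CFSR_err_eq \<psi>_def jump_def A_def B_def sym[of "u (x - h)" for h] field_simps
        eval_nat_numeral)
qed

theorem mainTheorem5:
  fixes u f D :: "real \<Rightarrow> real" and Dbar :: "real \<Rightarrow> real \<Rightarrow> real"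
    and \<kappa> \<kappa>3 \<theta> x :: real
  assumes "smooth1 u" and "smooth1 f" and "smooth1 D" and "smooth2 Dbar"
    and "\<And>a b. Dbar a b = Dbar b a"
    and "\<And>v. Dbar v v = D v"
  shows "(\<kappa>3 = 0 \<longrightarrow>
           (\<lambda>h. CFSR_err \<kappa> \<kappa>3 \<theta> f Dbar u x h
               - (deriv (f \<circ> u) x
                  + (3*\<theta> - 1) / 12 * (deriv ^^ 3) (f \<circ> u) x * h^2
                  - (\<kappa> - 1) / 8 * (deriv (D \<circ> u) x * (deriv ^^ 3) u x
                                    + D (u x) * (deriv ^^ 4) u x) * h^3))
           \<in> O[at_right 0](\<lambda>h. h^4))
       \<and> (\<theta> = 1/3 \<and> \<kappa>3 = \<kappa> - 1 \<longrightarrow>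
           (\<lambda>h. CFSR_err \<kappa> \<kappa>3 \<theta> f Dbar u x h - deriv (f \<circ> u) x)
           \<in> O[at_right 0](\<lambda>h. h^4))"
proof -
  have comp: "f \<circ> u = (\<lambda>y. f (u y))" "D \<circ> u = (\<lambda>y. Dbar (u y) (u y))" "D (u x) = Dbar (u x) (u x)"
    using assms(6) by (simp_all add: fun_eq_iff)
  have expansion: "(\<lambda>h. CFSR_err \<kappa> \<kappa>3 \<theta> f Dbar u x h
      - (deriv (f \<circ> u) x + (3 * \<theta> - 1) / 12 * (deriv ^^ 3) (f \<circ> u) x * h ^ 2
         + (1 - \<kappa> + \<kappa>3) / 8 * (deriv (D \<circ> u) x * (deriv ^^ 3) u x + D (u x) * (deriv ^^ 4) u x) * h ^ 3))
    \<in> O[at_right 0](\<lambda>h. h ^ 4)"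
    unfolding comp using CFSR_err_expansion[OF assms(1,2,4,5)]
    by (rule landau_o.big.filter_mono[OF at_le, rotated]) simp
  show ?thesis
    by (intro conjI impI)
      (use expansion in \<open>simp add: field_simps\<close>, use expansion in \<open>clarify, simp\<close>)
qed

end
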